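(* Let $m,k,\Delta \in \mathbb{Z}_{>0}$ with $m > k$. (i) If no Sauer Matrix of size $k$ is feasible for translations, then \[ h_s(m) \le 2\sum_{i=0}^{k-1}\binom{m}{i} \in \mathcal{O}(m^{k-1}). \] (ii) If no Sauer Matrix $S$ of size $k$ admits a translation vector $t \in [0,1)^k \cap (\tfrac1\Delta\mathbb{Z})^k\setminus\{\mathbf 0\}$ such that $t+S$ is totally $1$-submodular, then \[ h_s^{\Delta}(m) \le 2\sum_{i=0}^{k-1}\binom{m}{i} \in \mathcal{O}(m^{k-1}). \]
   Context: A real matrix is totally $1$-submodular if every square submatrix (of every size) has determinant of absolute value at most $1$. For $t\in\mathbb{R}^m$ and a matrix $A$ with columns $A_1,\dots,A_n$, $t+A$ is the matrix with columns $t+A_i$. The shifted Heller constant $h_s(m)$ is the maximum $n$ such that there exist $t \in [0,1)^m\setminus\{\mathbf 0\}$ and $A \in \{-1,0,1\}^{m\times n}$ with pairwise distinct columns such that $t+A$ is totally $1$-submodular; for an integer $\delta\ge2$, $h_s^\delta(m)$ is defined the same way but with $t \in [0,1)^m\cap(\tfrac1\delta\mathbb{Z})^m\setminus\{\mathbf 0\}$ (in (ii) the quantity $h_s^{\Delta}(m)$ is thus meant for $\Delta\ge 2$). A Sauer Matrix of size $k$ is a matrix $S\in\{-1,0,1\}^{k\times 2^k}$ whose columns have pairwise distinct supports, so that every subset of $[k]$ is the support (set of nonzero coordinates) of exactly one column, the nonzero entries being arbitrary elements of $\{-1,1\}$. A vector $r\in[0,1)^k$ is feasible for $S$ if $r+S$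 is totally $1$-submodular; $S$ is feasible for translations if some $r\in[0,1)^k$ is feasible for $S$. *)

theory Defs
  imports "Jordan_Normal_Form.Determinant" "Jordan_Normal_Form.DL_Submatrix"
          "HOL-Library.Landau_Symbols"
begin

definition totally_1_submodular :: "real mat \<Rightarrow> bool" where
  "totally_1_submodular M \<longleftrightarrow>
     (\<forall>I J. I \<subseteq> {..<dim_row M} \<longrightarrow> J \<subseteq> {..<dim_col M} \<longrightarrow> card I = card J \<longrightarrow>
        \<bar>det (submatrix M I J)\<bar> \<le> 1)"

definition translate :: "real vec \<Rightarrow> real mat \<Rightarrow> real mat" where
  "translate t A = mat (dim_row A) (dim_col A) (\<lambda>(i,j). t $ i + A $$ (i,j))"

definition ternary_mat :: "nat \<Rightarrow> nat \<Rightarrow> real mat \<Rightarrow> bool" where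
  "ternary_mat m n A \<longleftrightarrow> A \<in> carrier_mat m n \<and>
     (\<forall>i<m. \<forall>j<n. A $$ (i,j) \<in> {-1, 0, 1})"

definition distinct_columns :: "real mat \<Rightarrow> bool" where
  "distinct_columns A \<longleftrightarrow> (\<forall>j1<dim_col A. \<forall>j2<dim_col A. j1 \<noteq> j2 \<longrightarrow> col A j1 \<noteq> col A j2)"

definition unit_box :: "nat \<Rightarrow> real vec set" where
  "unit_box m = {t. dim_vec t = m \<and> (\<forall>i<m. 0 \<le> t $ i \<and> t $ i < 1)}"

definition grid :: "nat \<Rightarrow> nat \<Rightarrow> real vec set" where
  "grid \<delta> m = {t. dim_vec t = m \<and> (\<forall>i<m. \<exists>z::int. t $ i = real_of_int z / real \<delta>)}"

definition shifted_heller :: "nat \<Rightarrow> nat" ("h\<^sub>s") where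
  "h\<^sub>s m = Max {n. \<exists>t A. t \<in> unit_box m \<and> t \<noteq> 0\<^sub>v m \<and> ternary_mat m n A \<and>
                     distinct_columns A \<and> totally_1_submodular (translate t A)}"

definition shifted_heller_delta :: "nat \<Rightarrow> nat \<Rightarrow> nat" where
  "shifted_heller_delta \<delta> m = Max {n. \<exists>t A. t \<in> unit_box m \<inter> grid \<delta> m \<and> t \<noteq> 0\<^sub>v m \<and>
                     ternary_mat m n A \<and> distinct_columns A \<and> totally_1_submodular (translate t A)}"

definition col_support :: "real mat \<Rightarrow> nat \<Rightarrow> nat set" where
  "col_support S j = {i. i < dim_row S \<and> S $$ (i,j) \<noteq> 0}"

definition sauer_matrix :: "nat \<Rightarrow> real mat \<Rightarrow> bool" where
  "sauer_matrix k S \<longleftrightarrow> ternary_mat k (2^k) S \<and>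
     bij_betw (col_support S) {..<2^k} (Pow {..<k})"

definition feasible :: "real vec \<Rightarrow> real mat \<Rightarrow> bool" where
  "feasible r S \<longleftrightarrow> r \<in> unit_box (dim_row S) \<and> totally_1_submodular (translate r S)"

definition feasible_for_translations :: "real mat \<Rightarrow> bool" where
  "feasible_for_translations S \<longleftrightarrow> (\<exists>r. feasible r S)"

end

theory Submission
  imports Defs
begin

text \<open>Let \<open>t + A\<close> be totally 1-submodular, with \<open>t \<in> [0,1)\<^sup>m\<close> and \<open>A\<close> a ternary
  \<open>m \<times> n\<close> matrix with distinct columns. Two distinct columns with the same support have opposite
  signs in some row; that row is unshifted (\<open>t\<^sub>i = 0\<close>, as \<open>t\<^sub>i + 1 > 1\<close> otherwise), and a
  \<open>2 \<times> 2\<close> minor forces opposite signs also in the first unshifted row of the support. Splitting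
  the columns by their sign in that row, one class has pairwise distinct supports and, if
  \<open>n > 2 * (\<Sum>i<k. m choose i)\<close>, more than \<open>\<Sum>i<k. m choose i\<close> columns. By the Sauer-Shelah
  lemma their supports shatter a \<open>k\<close>-set \<open>K\<close> of rows; columns realising all traces on \<open>K\<close> form
  a Sauer matrix, and the restriction of \<open>t\<close> to \<open>K\<close> is feasible for it since total
  1-submodularity passes to submatrices. In the grid version the restricted translation is
  nonzero for \<open>k \<ge> 3\<close>: on three shattered unshifted rows the columns with traces of size two and
  three form a signed odd cycle with a \<open>3 \<times> 3\<close> minor of absolute value 2.\<close>

section \<open>Minors of totally 1-submodular matrices\<close>

definition submatrix_list :: "'a mat \<Rightarrow> nat list \<Rightarrow> nat list \<Rightarrow> 'a mat" where
  "submatrix_list M rs cs = mat (length rs) (length cs) (\<lambda>(u, v). M $$ (rs ! u, cs ! v))"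

lemma pick_sorted_list_of_set:
  assumes "finite I" "i < card I"
  shows "pick I i = sorted_list_of_set I ! i"
proof -
  define xs where "xs = sorted_list_of_set I"
  have xs: "sorted_wrt (<) xs" "distinct xs" "set xs = I" "length xs = card I"
    using assms(1) unfolding xs_def by simp_all
  have "{a \<in> I. a < xs ! i} = (!) xs ` {..<i}"
  proof (intro equalityI subsetI)
    fix a assume "a \<in> {a \<in> I. a < xs ! i}"
    then obtain j where "j < length xs" "a = xs ! j" "xs ! j < xs ! i"
      using xs(3) by (auto simp: in_set_conv_nth)
    then show "a \<in> (!) xs ` {..<i}"
      using xs(1,4) assms(2) by (metis imageI lessThan_iff linorder_neqE_nat not_less_iff_gr_or_eq sorted_wrt_nth_less)
  next
    fix a assume "a \<in> (!) xs ` {..<i}"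
    then show "a \<in> {a \<in> I. a < xs ! i}"
      using xs assms(2) by (auto simp: sorted_wrt_nth_less)
  qed
  moreover have "card ((!) xs ` {..<i}) = i"
    using xs assms(2) by (subst card_image) (auto intro: inj_on_subset[OF inj_on_nth])
  moreover have "xs ! i \<in> I"
    using xs assms(2) by auto
  ultimately show ?thesis
    unfolding xs_def[symmetric] by (metis pick_card_in_set)
qed

lemma submatrix_eq_submatrix_list:
  assumes "I \<subseteq> {..<dim_row M}" "J \<subseteq> {..<dim_col M}"
  shows "submatrix M I J = submatrix_list M (sorted_list_of_set I) (sorted_list_of_set J)"
proof -
  have fin: "finite I" "finite J"
    using assms finite_subset by blast+
  have "{i. i < dim_row M \<and> i \<in> I} = I" "{j. j < dim_col M \<and> j \<in> J} = J"
    using assms by auto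
  then show ?thesis
    unfolding submatrix_def submatrix_list_def
    by (intro eq_matI) (simp_all add: fin pick_sorted_list_of_set)
qed

lemma submatrix_list_submatrix_list:
  assumes "set rs' \<subseteq> {..<length rs}" "set cs' \<subseteq> {..<length cs}"
  shows "submatrix_list (submatrix_list M rs cs) rs' cs'
       = submatrix_list M (map ((!) rs) rs') (map ((!) cs) cs')"
  using assms unfolding submatrix_list_def by (intro eq_matI) (auto simp: subset_iff)

lemma det_permute_rows_cols:
  assumes "A \<in> carrier_mat n n" "p permutes {..<n}" "q permutes {..<n}"
  shows "det (mat n n (\<lambda>(i, j). A $$ (p i, q j))) = signof p * signof q * det A"
proof -
  define B where "B = mat n n (\<lambda>(i, j). A $$ (i, q j))"
  have B: "B \<in> carrier_mat n n" unfolding B_def by simp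
  have pq: "p permutes {0..<n}" "q permutes {0..<n}"
    using assms(2,3) by (simp_all add: atLeast0LessThan)
  have "det B = det (transpose_mat B)"
    using B by (simp add: det_transpose)
  also have "transpose_mat B = mat n n (\<lambda>(i, j). transpose_mat A $$ (q i, j))"
    using assms(1) permutes_in_image[OF assms(3)] unfolding B_def by (intro eq_matI) auto
  also have "det \<dots> = signof q * det A"
    using det_permute_rows[OF transpose_carrier_mat[THEN iffD2, OF assms(1)] pq(2)] assms(1)
    by (simp add: det_transpose)
  finally have detB: "det B = signof q * det A" .
  have "mat n n (\<lambda>(i, j). A $$ (p i, q j)) = mat n n (\<lambda>(i, j). B $$ (p i, j))"
    using permutes_in_image[OF assms(2)] unfolding B_def by (intro eq_matI) auto
  then show ?thesis
    using det_permute_rows[OF B pq(1)] detB by simp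
qed

lemma mset_sorted_list_of_set_set:
  "distinct xs \<Longrightarrow> mset (sorted_list_of_set (set xs)) = mset xs"
  by (metis mset_set_set mset_sorted_list_of_multiset sorted_list_of_mset_set)

lemma totally_1_submodular_abs_det_le:
  assumes "totally_1_submodular M" "distinct rs" "distinct cs" "length rs = length cs"
    "set rs \<subseteq> {..<dim_row M}" "set cs \<subseteq> {..<dim_col M}"
  shows "\<bar>det (submatrix_list M rs cs)\<bar> \<le> 1"
proof -
  define l where "l = length rs"
  define rs' where "rs' = sorted_list_of_set (set rs)"
  define cs' where "cs' = sorted_list_of_set (set cs)"
  have len: "length rs' = l" "length cs' = l"
    unfolding rs'_def cs'_def l_def using assms(2-4) by (simp_all add: distinct_card)
  define B where "B = submatrix M (set rs) (set cs)"
  have B_eq: "B = submatrix_list M rs' cs'"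
    unfolding B_def rs'_def cs'_def using assms(5,6) by (rule submatrix_eq_submatrix_list)
  have det_B: "\<bar>det B\<bar> \<le> 1"
    unfolding B_def using assms(2-6)
    by (intro assms(1)[unfolded totally_1_submodular_def, rule_format]) (simp_all add: distinct_card)
  obtain p where p: "p permutes {..<l}" "permute_list p rs' = rs"
    using mset_eq_permutation[OF mset_sorted_list_of_set_set[OF assms(2), folded rs'_def, symmetric]]
    unfolding len .
  obtain q where q: "q permutes {..<l}" "permute_list q cs' = cs"
    using mset_eq_permutation[OF mset_sorted_list_of_set_set[OF assms(3), folded cs'_def, symmetric]]
    unfolding len .
  have "rs ! i = rs' ! p i" if "i < l" for i
    using permute_list_nth[of p rs' i] p len that by simp
  moreover have "cs ! j = cs' ! q j" if "j < l" for j
    using permute_list_nth[of q cs' j] q len that by simp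
  ultimately have "submatrix_list M rs cs = mat l l (\<lambda>(i, j). B $$ (p i, q j))"
    unfolding B_eq submatrix_list_def using assms(4) len permutes_in_image[OF p(1)] permutes_in_image[OF q(1)]
    by (intro eq_matI) (auto simp: l_def)
  moreover have "B \<in> carrier_mat l l"
    unfolding B_eq submatrix_list_def using len by simp
  ultimately have "det (submatrix_list M rs cs) = signof p * signof q * det B"
    using det_permute_rows_cols p(1) q(1) by simp
  moreover have "\<bar>signof p :: real\<bar> = 1" "\<bar>signof q :: real\<bar> = 1"
    using signof_pm_one[of p, where 'a = real] signof_pm_one[of q, where 'a = real] by auto
  ultimately show ?thesis
    using det_B by (simp add: abs_mult)
qed

lemma totally_1_submodular_submatrix_list:
  assumes "totally_1_submodular M" "distinct rs" "distinct cs"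
    "set rs \<subseteq> {..<dim_row M}" "set cs \<subseteq> {..<dim_col M}"
  shows "totally_1_submodular (submatrix_list M rs cs)"
  unfolding totally_1_submodular_def
proof (intro allI impI)
  fix I J
  assume I: "I \<subseteq> {..<dim_row (submatrix_list M rs cs)}"
    and J: "J \<subseteq> {..<dim_col (submatrix_list M rs cs)}" and IJ: "card I = card J"
  define rs' where "rs' = sorted_list_of_set I"
  define cs' where "cs' = sorted_list_of_set J"
  have fin: "finite I" "finite J"
    using I J finite_subset by blast+
  have rs': "distinct rs'" "set rs' = I" "length rs' = card I"
    and cs': "distinct cs'" "set cs' = J" "length cs' = card J"
    unfolding rs'_def cs'_def using fin by simp_all
  have sub: "set rs' \<subseteq> {..<length rs}" "set cs' \<subseteq> {..<length cs}"
    using I J rs'(2) cs'(2) by (simp_all add: submatrix_list_def)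
  have "submatrix (submatrix_list M rs cs) I J = submatrix_list M (map ((!) rs) rs') (map ((!) cs) cs')"
    unfolding submatrix_eq_submatrix_list[OF I J] rs'_def[symmetric] cs'_def[symmetric]
    using sub by (rule submatrix_list_submatrix_list)
  moreover have "distinct (map ((!) rs) rs')" "distinct (map ((!) cs) cs')"
    using rs'(1) cs'(1) sub assms(2,3) by (auto simp: distinct_map intro: inj_on_subset[OF inj_on_nth])
  moreover have "set (map ((!) rs) rs') \<subseteq> {..<dim_row M}" "set (map ((!) cs) cs') \<subseteq> {..<dim_col M}"
    using sub assms(4,5) by (auto simp: subset_iff)
  ultimately show "\<bar>det (submatrix (submatrix_list M rs cs) I J)\<bar> \<le> 1"
    using totally_1_submodular_abs_det_le[OF assms(1)] rs'(3) cs'(3) IJ by simp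
qed

lemma det_mat_2:
  "det (mat 2 2 f) = f (0, 0) * f (1, 1) - f (0, 1) * (f (1, 0) :: 'a :: comm_ring_1)"
proof -
  have "det (mat 2 2 f) = (\<Sum>j<2. f (0, j) * cofactor (mat 2 2 f) 0 j)"
    using laplace_expansion_row[of "mat 2 2 f" 2 0] by simp
  then show ?thesis
    by (simp add: numeral_2_eq_2 cofactor_def det_single mat_delete_def)
qed

lemma det_mat_3:
  "det (mat 3 3 f) = f (0, 0) * (f (1, 1) * f (2, 2) - f (1, 2) * f (2, 1))
                   - f (0, 1) * (f (1, 0) * f (2, 2) - f (1, 2) * f (2, 0))
                   + f (0, 2) * (f (1, 0) * f (2, 1) - f (1, 1) * (f (2, 0) :: 'a :: comm_ring_1))"
proof -
  have "det (mat 3 3 f) = (\<Sum>j<3. f (0, j) * cofactor (mat 3 3 f) 0 j)"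
    using laplace_expansion_row[of "mat 3 3 f" 3 0] by simp
  then show ?thesis
    by (simp add: numeral_3_eq_3 numeral_2_eq_2 det_mat_2[unfolded numeral_2_eq_2] cofactor_def
        mat_delete_def algebra_simps)
qed

lemma totally_1_submodular_abs_entry_le:
  assumes "totally_1_submodular M" "i < dim_row M" "j < dim_col M"
  shows "\<bar>M $$ (i, j)\<bar> \<le> 1"
  using totally_1_submodular_abs_det_le[OF assms(1), of "[i]" "[j]"] assms
  by (simp add: submatrix_list_def det_single)

lemma totally_1_submodular_abs_minor2_le:
  assumes "totally_1_submodular M" "a \<noteq> b" "a < dim_row M" "b < dim_row M"
    "p \<noteq> q" "p < dim_col M" "q < dim_col M"
  shows "\<bar>M $$ (a, p) * M $$ (b, q) - M $$ (a, q) * M $$ (b, p)\<bar> \<le> 1"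
  using totally_1_submodular_abs_det_le[OF assms(1), of "[a, b]" "[p, q]"] assms
  by (simp add: submatrix_list_def det_mat_2[unfolded numeral_2_eq_2])

lemma unit_eq_if_abs_diff_le_one:
  fixes u v :: real
  assumes "\<bar>u\<bar> = 1" "\<bar>v\<bar> = 1" "\<bar>u - v\<bar> \<le> 1"
  shows "u = v"
  using assms by (auto simp: abs_if split: if_splits)

lemma mult_self_eq_one_if_abs_eq_one: "\<bar>u\<bar> = 1 \<Longrightarrow> u * u = (1 :: real)"
  by (metis abs_mult_self_eq mult_1)

lemma unit_cross_eq:
  fixes u v s t :: real
  assumes "u * t = s * v" "t * t = 1" "v * v = 1"
  shows "u * v = s * t"
proof -
  have "u * v = (u * t) * v * t"
    using assms(2) by (simp add: ac_simps)
  also have "\<dots> = s * t * (v * v)"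
    unfolding assms(1) by (simp add: ac_simps)
  finally show ?thesis
    using assms(3) by simp
qed

text \<open>The \<open>2 \<times> 2\<close> minors against the column \<open>w\<close> force \<open>ax bx = aw bw\<close>, \<open>ay cy = aw cw\<close>,
  \<open>bz cz = bw cw\<close>; hence the two terms of the \<open>3 \<times> 3\<close> minor have product 1, so they are equal
  and the minor is \<open>\<plusminus>2\<close>.\<close>

lemma signed_odd_cycle_contradiction:
  fixes ax bx ay cy bz cz aw bw cw :: real
  assumes units: "\<bar>ax\<bar> = 1" "\<bar>bx\<bar> = 1" "\<bar>ay\<bar> = 1" "\<bar>cy\<bar> = 1" "\<bar>bz\<bar> = 1" "\<bar>cz\<bar> = 1"
      "\<bar>aw\<bar> = 1" "\<bar>bw\<bar> = 1" "\<bar>cw\<bar> = 1"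
    and ab: "\<bar>ax * bw - aw * bx\<bar> \<le> 1" and ac: "\<bar>ay * cw - aw * cy\<bar> \<le> 1"
    and bc: "\<bar>bz * cw - bw * cz\<bar> \<le> 1"
    and abc: "\<bar>ax * bz * cy + ay * bx * cz\<bar> \<le> 1"
  shows False
proof -
  note sq = units[THEN mult_self_eq_one_if_abs_eq_one]
  have "ax * bw = aw * bx"
    by (rule unit_eq_if_abs_diff_le_one[OF _ _ ab]) (simp_all only: abs_mult units mult_1)
  then have "ax * bx = aw * bw"
    using sq(8,2) by (rule unit_cross_eq)
  have "ay * cw = aw * cy"
    by (rule unit_eq_if_abs_diff_le_one[OF _ _ ac]) (simp_all only: abs_mult units mult_1)
  then have "ay * cy = aw * cw"
    using sq(9,4) by (rule unit_cross_eq)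
  have "bz * cw = bw * cz"
    by (rule unit_eq_if_abs_diff_le_one[OF _ _ bc]) (simp_all only: abs_mult units mult_1)
  then have "bz * cz = bw * cw"
    using sq(9,6) by (rule unit_cross_eq)
  define P Q where "P = ax * bz * cy" and "Q = ay * bx * cz"
  have "P * Q = (ax * bx) * (ay * cy) * (bz * cz)"
    unfolding P_def Q_def by (simp add: ac_simps)
  also have "\<dots> = (aw * aw) * (bw * bw) * (cw * cw)"
    unfolding \<open>ax * bx = aw * bw\<close> \<open>ay * cy = aw * cw\<close> \<open>bz * cz = bw * cw\<close> by (simp add: ac_simps)
  finally have "P * Q = 1"
    using sq by simp
  have "\<bar>P\<bar> = 1"
    unfolding P_def using units by (simp add: abs_mult)
  have "Q = (P * P) * Q"
    using mult_self_eq_one_if_abs_eq_one[OF \<open>\<bar>P\<bar> = 1\<close>] by simp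
  also have "\<dots> = P"
    using \<open>P * Q = 1\<close> by (simp add: mult.assoc)
  finally have "\<bar>P + P\<bar> \<le> 1"
    using abc unfolding P_def Q_def by simp
  then show False
    using \<open>\<bar>P\<bar> = 1\<close> by linarith
qed

lemma totally_1_submodular_no_signed_odd_cycle:
  fixes M :: "real mat"
  assumes "totally_1_submodular M"
    and rows: "distinct [a, b, c]" "a < dim_row M" "b < dim_row M" "c < dim_row M"
    and cols: "distinct [x, y, z, w]" "x < dim_col M" "y < dim_col M" "z < dim_col M" "w < dim_col M"
    and zeros: "M $$ (c, x) = 0" "M $$ (b, y) = 0" "M $$ (a, z) = 0"
    and units: "\<bar>M $$ (a, x)\<bar> = 1" "\<bar>M $$ (b, x)\<bar> = 1" "\<bar>M $$ (a, y)\<bar> = 1"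
      "\<bar>M $$ (c, y)\<bar> = 1" "\<bar>M $$ (b, z)\<bar> = 1" "\<bar>M $$ (c, z)\<bar> = 1"
      "\<bar>M $$ (a, w)\<bar> = 1" "\<bar>M $$ (b, w)\<bar> = 1" "\<bar>M $$ (c, w)\<bar> = 1"
  shows False
proof (rule signed_odd_cycle_contradiction[OF units])
  show "\<bar>M $$ (a, x) * M $$ (b, w) - M $$ (a, w) * M $$ (b, x)\<bar> \<le> 1"
    "\<bar>M $$ (a, y) * M $$ (c, w) - M $$ (a, w) * M $$ (c, y)\<bar> \<le> 1"
    "\<bar>M $$ (b, z) * M $$ (c, w) - M $$ (b, w) * M $$ (c, z)\<bar> \<le> 1"
    using rows cols by (simp_all add: totally_1_submodular_abs_minor2_le[OF assms(1)])
  have "\<bar>det (submatrix_list M [a, b, c] [x, y, z])\<bar> \<le> 1"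
    using rows cols by (intro totally_1_submodular_abs_det_le[OF assms(1)]) auto
  then show "\<bar>M $$ (a, x) * M $$ (b, z) * M $$ (c, y) + M $$ (a, y) * M $$ (b, x) * M $$ (c, z)\<bar> \<le> 1"
    using zeros by (simp add: submatrix_list_def det_mat_3[unfolded numeral_3_eq_3 numeral_2_eq_2]
        algebra_simps)
qed

lemma totally_1_submodular_no_columns:
  assumes "dim_col M = 0"
  shows "totally_1_submodular M"
  unfolding totally_1_submodular_def
proof (intro allI impI)
  fix I J
  assume "I \<subseteq> {..<dim_row M}" "J \<subseteq> {..<dim_col M}" "card I = card J"
  then have "submatrix M I J \<in> carrier_mat 0 0"
    using assms finite_subset[of I] by (auto simp: dim_submatrix)
  then show "\<bar>det (submatrix M I J)\<bar> \<le> 1"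
    by simp
qed

lemma totally_1_submodular_two_rows:
  fixes M :: "real mat"
  assumes "dim_row M \<le> 2"
    and entries: "\<And>i j. i < dim_row M \<Longrightarrow> j < dim_col M \<Longrightarrow> \<bar>M $$ (i, j)\<bar> \<le> 1"
    and minors: "\<And>p q. dim_row M = 2 \<Longrightarrow> p < q \<Longrightarrow> q < dim_col M \<Longrightarrow>
      \<bar>M $$ (0, p) * M $$ (1, q) - M $$ (0, q) * M $$ (1, p)\<bar> \<le> 1"
  shows "totally_1_submodular M"
  unfolding totally_1_submodular_def
proof (intro allI impI)
  fix I J
  assume I: "I \<subseteq> {..<dim_row M}" and J: "J \<subseteq> {..<dim_col M}" and IJ: "card I = card J"
  define rs cs where "rs = sorted_list_of_set I" and "cs = sorted_list_of_set J"
  have fin: "finite I" "finite J"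
    using I J finite_subset by blast+
  have rs: "sorted_wrt (<) rs" "set rs = I" and cs: "sorted_wrt (<) cs" "set cs = J"
    unfolding rs_def cs_def using fin by simp_all
  have "length rs \<le> 2"
    unfolding rs_def using card_mono[OF _ I] assms(1) by simp
  moreover have "length cs = length rs"
    unfolding rs_def cs_def using IJ by simp
  ultimately consider "rs = []" "cs = []" | i j where "rs = [i]" "cs = [j]"
    | a b p q where "rs = [a, b]" "cs = [p, q]"
    by (auto simp: le_Suc_eq numeral_2_eq_2 length_Suc_conv)
  then have "\<bar>det (submatrix_list M rs cs)\<bar> \<le> 1"
  proof cases
    case 1
    then show ?thesis
      by (simp add: submatrix_list_def)
  next
    case (2 i j)
    then have "i < dim_row M" "j < dim_col M"
      using I J rs(2) cs(2) by auto
    then show ?thesis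
      using 2 entries by (simp add: submatrix_list_def det_single)
  next
    case (3 a b p q)
    then have "a = 0" "b = 1" "dim_row M = 2" "p < q" "q < dim_col M"
      using I J rs cs assms(1) by auto
    then show ?thesis
      using 3 minors by (simp add: submatrix_list_def det_mat_2[unfolded numeral_2_eq_2])
  qed
  then show "\<bar>det (submatrix M I J)\<bar> \<le> 1"
    unfolding submatrix_eq_submatrix_list[OF I J] rs_def cs_def .
qed

section \<open>The Sauer-Shelah lemma\<close>

definition shatters :: "'a set set \<Rightarrow> 'a set \<Rightarrow> bool" where
  "shatters F K \<longleftrightarrow> (\<forall>T \<subseteq> K. \<exists>S \<in> F. S \<inter> K = T)"

lemma shatters_subset:
  assumes "shatters F K" "K' \<subseteq> K"
  shows "shatters F K'"
  unfolding shatters_def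
proof (intro allI impI)
  fix T assume "T \<subseteq> K'"
  then obtain S where "S \<in> F" "S \<inter> K = T"
    using assms unfolding shatters_def by blast
  then show "\<exists>S \<in> F. S \<inter> K' = T"
    using \<open>T \<subseteq> K'\<close> assms(2) by blast
qed

lemma shatters_mono:
  assumes "shatters F K" "F \<subseteq> G"
  shows "shatters G K"
  unfolding shatters_def
proof (intro allI impI)
  fix T assume "T \<subseteq> K"
  then obtain S where "S \<in> F" "S \<inter> K = T"
    using assms(1) unfolding shatters_def by blast
  then show "\<exists>S \<in> G. S \<inter> K = T"
    using assms(2) by blast
qed

definition shattered_subsets :: "'a set set \<Rightarrow> 'a set \<Rightarrow> 'a set set" where
  "shattered_subsets F X = {K \<in> Pow X. shatters F K}"

definition family_without :: "'a \<Rightarrow> 'a set set \<Rightarrow> 'a set set" where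
  "family_without x F = {S \<in> F. x \<notin> S}"

definition family_with_removed :: "'a \<Rightarrow> 'a set set \<Rightarrow> 'a set set" where
  "family_with_removed x F = (\<lambda>S. S - {x}) ` {S \<in> F. x \<in> S}"

lemma card_family_split:
  assumes "finite F"
  shows "card F = card (family_without x F \<union> family_with_removed x F)
                 + card (family_without x F \<inter> family_with_removed x F)"
proof -
  have "card F = card (family_without x F) + card {S \<in> F. x \<in> S}"
    unfolding family_without_def using assms
    by (subst card_Un_disjoint[symmetric]) (auto intro: arg_cong[where f = card])
  also have "card {S \<in> F. x \<in> S} = card (family_with_removed x F)"
    unfolding family_with_removed_def
    by (rule card_image[symmetric]) (auto intro!: inj_onI dest: insert_Diff)
  also have "card (family_without x F) + \<dots> = card (family_without x F \<union> family_with_removed x F)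
                 + card (family_without x F \<inter> family_with_removed x F)"
    using assms unfolding family_without_def family_with_removed_def by (intro card_Un_Int) auto
  finally show ?thesis .
qed

lemma shattered_subsets_union_split:
  assumes "x \<notin> X"
  shows "shattered_subsets (family_without x F \<union> family_with_removed x F) X
           \<subseteq> shattered_subsets F (insert x X)"
proof
  fix K assume "K \<in> shattered_subsets (family_without x F \<union> family_with_removed x F) X"
  then have K: "K \<subseteq> X" "shatters (family_without x F \<union> family_with_removed x F) K"
    unfolding shattered_subsets_def by auto
  have "shatters F K"
    unfolding shatters_def
  proof (intro allI impI)
    fix T assume "T \<subseteq> K"
    then obtain S where "S \<in> family_without x F \<union> family_with_removed x F" "S \<inter> K = T"
      using K(2) unfolding shatters_def by blast
    then show "\<exists>S \<in> F. S \<inter> K = T"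
      using K(1) assms unfolding family_without_def family_with_removed_def by auto
  qed
  then show "K \<in> shattered_subsets F (insert x X)"
    using K(1) unfolding shattered_subsets_def by auto
qed

lemma shattered_subsets_inter_split:
  assumes "x \<notin> X"
  shows "insert x ` shattered_subsets (family_without x F \<inter> family_with_removed x F) X
           \<subseteq> shattered_subsets F (insert x X)"
proof
  fix K' assume "K' \<in> insert x ` shattered_subsets (family_without x F \<inter> family_with_removed x F) X"
  then obtain K where K: "K \<subseteq> X" "shatters (family_without x F \<inter> family_with_removed x F) K"
    and K': "K' = insert x K"
    unfolding shattered_subsets_def by auto
  have "shatters F (insert x K)"
    unfolding shatters_def
  proof (intro allI impI)
    fix T assume T: "T \<subseteq> insert x K"
    then obtain S where S: "S \<in> family_without x F \<inter> family_with_removed x F" "S \<inter> K = T - {x}"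
      using K(2) unfolding shatters_def by (metis Diff_subset_conv insert_is_Un)
    then have "S \<in> F" "x \<notin> S"
      unfolding family_without_def by auto
    from S(1) obtain S0 where "S0 \<in> F" "x \<in> S0" "S = S0 - {x}"
      unfolding family_with_removed_def by auto
    then have "insert x S \<in> F"
      by (simp add: insert_absorb)
    show "\<exists>S \<in> F. S \<inter> insert x K = T"
    proof (cases "x \<in> T")
      case True
      then have "insert x S \<inter> insert x K = T"
        using S(2) T by auto
      then show ?thesis
        using \<open>insert x S \<in> F\<close> by blast
    next
      case False
      then have "S \<inter> insert x K = T"
        using S(2) T \<open>x \<notin> S\<close> by auto
      then show ?thesis
        using \<open>S \<in> F\<close> by blast
    qed
  qed
  then show "K' \<in> shattered_subsets F (insert x X)"
    using K(1) K' unfolding shattered_subsets_def by auto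
qed

lemma card_le_card_shattered_subsets:
  assumes "finite X" "F \<subseteq> Pow X"
  shows "card F \<le> card (shattered_subsets F X)"
  using assms
proof (induction X arbitrary: F rule: finite_induct)
  case empty
  then consider "F = {}" | "F = {{}}"
    by (metis Pow_empty subset_singleton_iff)
  then show ?case
  proof cases
    case 2
    then have "shattered_subsets F {} = {{}}"
      by (auto simp: shattered_subsets_def shatters_def)
    then show ?thesis
      using 2 by simp
  qed simp
next
  case (insert x X F)
  define G1 where "G1 = family_without x F \<union> family_with_removed x F"
  define G2 where "G2 = family_without x F \<inter> family_with_removed x F"
  have "G1 \<subseteq> Pow X" "G2 \<subseteq> Pow X"
    using insert.prems unfolding G1_def G2_def family_without_def family_with_removed_def by auto
  note IH = insert.IH[OF this(1)] insert.IH[OF this(2)]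
  have fin: "finite F" "finite (shattered_subsets F (insert x X))"
    using insert.prems insert.hyps(1) finite_subset unfolding shattered_subsets_def by auto
  have sub1: "shattered_subsets G1 X \<subseteq> shattered_subsets F (insert x X)"
    unfolding G1_def using insert.hyps(2) by (rule shattered_subsets_union_split)
  have sub2: "insert x ` shattered_subsets G2 X \<subseteq> shattered_subsets F (insert x X)"
    unfolding G2_def using insert.hyps(2) by (rule shattered_subsets_inter_split)
  have "card F \<le> card (shattered_subsets G1 X) + card (shattered_subsets G2 X)"
    using card_family_split[OF fin(1), of x] IH unfolding G1_def G2_def by linarith
  also have "card (shattered_subsets G2 X) = card (insert x ` shattered_subsets G2 X)"
    using insert.hyps(2)
    by (intro card_image[symmetric] inj_onI) (auto simp: shattered_subsets_def insert_ident)
  also have "card (shattered_subsets G1 X) + \<dots>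
      = card (shattered_subsets G1 X \<union> insert x ` shattered_subsets G2 X)"
    using finite_subset[OF sub1 fin(2)] finite_subset[OF sub2 fin(2)] insert.hyps(2)
    by (intro card_Un_disjoint[symmetric]) (auto simp: shattered_subsets_def)
  also have "\<dots> \<le> card (shattered_subsets F (insert x X))"
    using sub1 sub2 fin(2) by (intro card_mono) auto
  finally show ?case .
qed

lemma card_subsets_less:
  assumes "finite X"
  shows "card {K \<in> Pow X. card K < k} = (\<Sum>i<k. card X choose i)"
proof -
  have "{K \<in> Pow X. card K < k} = (\<Union>i<k. {K. K \<subseteq> X \<and> card K = i})"
    by auto
  also have "card \<dots> = (\<Sum>i<k. card {K. K \<subseteq> X \<and> card K = i})"
    by (rule card_UN_disjoint) (use assms in auto)
  finally have "card {K \<in> Pow X. card K < k} = (\<Sum>i<k. card {K. K \<subseteq> X \<and> card K = i})" .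
  then show ?thesis
    using n_subsets[OF assms] by simp
qed

theorem sauer_shelah:
  assumes "finite X" "F \<subseteq> Pow X" "(\<Sum>i<k. card X choose i) < card F"
  obtains K where "K \<subseteq> X" "card K = k" "shatters F K"
proof -
  have "\<exists>K \<in> Pow X. shatters F K \<and> k \<le> card K"
  proof (rule ccontr)
    assume "\<not> ?thesis"
    then have "shattered_subsets F X \<subseteq> {K \<in> Pow X. card K < k}"
      unfolding shattered_subsets_def by auto
    then have "card (shattered_subsets F X) \<le> card {K \<in> Pow X. card K < k}"
      by (rule card_mono[rotated]) (use assms(1) in simp)
    then show False
      using card_le_card_shattered_subsets[OF assms(1,2)] assms(3) card_subsets_less[OF assms(1), of k]
      by linarith
  qed
  then obtain K K' where "K \<subseteq> X" "shatters F K" "K' \<subseteq> K" "card K' = k"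
    by (meson PowD obtain_subset_with_card_n)
  then show ?thesis
    using that[of K'] shatters_subset[of F K K'] by auto
qed

section \<open>Sauer submatrices of translated ternary matrices\<close>

lemma bij_betw_index_subsets:
  assumes "distinct xs"
  shows "bij_betw (\<lambda>T. {i. i < length xs \<and> xs ! i \<in> T}) (Pow (set xs)) (Pow {..<length xs})"
proof (rule bij_betw_byWitness[where f' = "image ((!) xs)"])
  have "x \<in> (!) xs ` {i. i < length xs \<and> xs ! i \<in> T}" if "T \<subseteq> set xs" "x \<in> T" for T x
    using that by (metis (mono_tags, lifting) imageI in_set_conv_nth mem_Collect_eq subsetD)
  then show "\<forall>T \<in> Pow (set xs). (!) xs ` {i. i < length xs \<and> xs ! i \<in> T} = T"
    by auto
  show "\<forall>U \<in> Pow {..<length xs}. {i. i < length xs \<and> xs ! i \<in> (!) xs ` U} = U"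
    using assms by (auto simp: nth_eq_iff_index_eq)
  show "(\<lambda>T. {i. i < length xs \<and> xs ! i \<in> T}) ` Pow (set xs) \<subseteq> Pow {..<length xs}"
    by auto
  show "image ((!) xs) ` Pow {..<length xs} \<subseteq> Pow (set xs)"
    by auto
qed

lemma nth_less_if_set_subset_lessThan: "set xs \<subseteq> {..<m} \<Longrightarrow> i < length xs \<Longrightarrow> xs ! i < (m :: nat)"
  by (metis lessThan_iff nth_mem subsetD)

lemma ternary_mat_submatrix_list:
  assumes "ternary_mat m n A" "set rs \<subseteq> {..<m}" "set cs \<subseteq> {..<n}"
  shows "ternary_mat (length rs) (length cs) (submatrix_list A rs cs)"
  using assms unfolding ternary_mat_def submatrix_list_def
  by (simp add: nth_less_if_set_subset_lessThan)

lemma col_support_submatrix_list: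
  assumes "set rs \<subseteq> {..<dim_row A}" "j < length cs"
  shows "col_support (submatrix_list A rs cs) j = {i. i < length rs \<and> rs ! i \<in> col_support A (cs ! j)}"
  using assms unfolding col_support_def submatrix_list_def
  by (auto simp: nth_less_if_set_subset_lessThan)

lemma sauer_matrix_submatrix_list:
  assumes A: "ternary_mat m n A" and rs: "distinct rs" "set rs \<subseteq> {..<m}"
    and cs: "distinct cs" "set cs \<subseteq> {..<n}" "length cs = 2 ^ length rs"
    and traces: "(\<lambda>j. col_support A j \<inter> set rs) ` set cs = Pow (set rs)"
  shows "sauer_matrix (length rs) (submatrix_list A rs cs)"
proof -
  define trace where "trace j = col_support A j \<inter> set rs" for j
  define index where "index T = {i. i < length rs \<and> rs ! i \<in> T}" for T
  have "card (trace ` set cs) = card (set cs)"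
    using traces rs(1) cs(1,3) unfolding trace_def by (simp add: card_Pow distinct_card)
  then have "bij_betw trace (set cs) (Pow (set rs))"
    using traces unfolding bij_betw_def trace_def by (simp add: eq_card_imp_inj_on)
  moreover have "bij_betw ((!) cs) {..<2 ^ length rs} (set cs)"
    using cs by (intro bij_betw_nth) auto
  moreover have "bij_betw index (Pow (set rs)) (Pow {..<length rs})"
    using bij_betw_index_subsets[OF rs(1)] unfolding index_def .
  ultimately have "bij_betw (index \<circ> trace \<circ> (!) cs) {..<2 ^ length rs} (Pow {..<length rs})"
    by (metis bij_betw_trans)
  moreover have "col_support (submatrix_list A rs cs) j = (index \<circ> trace \<circ> (!) cs) j"
    if "j \<in> {..<2 ^ length rs}" for j
    using col_support_submatrix_list[of rs A j cs] that A rs(2) cs(3)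
    unfolding index_def trace_def ternary_mat_def by auto
  ultimately have "bij_betw (col_support (submatrix_list A rs cs)) {..<2 ^ length rs} (Pow {..<length rs})"
    using bij_betw_cong by blast
  then show ?thesis
    unfolding sauer_matrix_def using ternary_mat_submatrix_list[OF A rs(2) cs(2)] cs(3) by simp
qed

definition restrict_vec :: "'a vec \<Rightarrow> nat set \<Rightarrow> 'a vec" where
  "restrict_vec t K = vec (card K) (\<lambda>i. t $ (sorted_list_of_set K ! i))"

lemma sorted_list_of_set_nth_less:
  fixes K :: "nat set"
  assumes "K \<subseteq> {..<m}" "i < card K"
  shows "sorted_list_of_set K ! i < m"
proof -
  have "finite K"
    using assms(1) by (rule finite_subset) simp
  then show ?thesis
    using assms by (simp add: nth_less_if_set_subset_lessThan)
qed

lemma restrict_vec_unit_box: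
  "t \<in> unit_box m \<Longrightarrow> K \<subseteq> {..<m} \<Longrightarrow> restrict_vec t K \<in> unit_box (card K)"
  unfolding unit_box_def restrict_vec_def by (simp add: sorted_list_of_set_nth_less)

lemma restrict_vec_grid:
  "t \<in> grid \<delta> m \<Longrightarrow> K \<subseteq> {..<m} \<Longrightarrow> restrict_vec t K \<in> grid \<delta> (card K)"
  unfolding grid_def restrict_vec_def by (simp add: sorted_list_of_set_nth_less)

lemma restrict_vec_nonzero:
  assumes "finite K" "i \<in> K" "t $ i \<noteq> 0"
  shows "restrict_vec t K \<noteq> 0\<^sub>v (card K)"
proof -
  obtain j where "j < card K" "sorted_list_of_set K ! j = i"
    using assms(1,2) by (metis in_set_conv_nth length_sorted_list_of_set set_sorted_list_of_set)
  then have "restrict_vec t K $ j \<noteq> 0\<^sub>v (card K) $ j"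
    using assms(3) by (simp add: restrict_vec_def)
  then show ?thesis
    by auto
qed

locale t1s_translate =
  fixes t :: "real vec" and A :: "real mat" and m n :: nat
  assumes t_unit_box: "t \<in> unit_box m"
    and ternary: "ternary_mat m n A"
    and distinct_cols: "distinct_columns A"
    and t1s: "totally_1_submodular (translate t A)"
begin

lemma dim_A [simp]: "dim_row A = m" "dim_col A = n"
  using ternary unfolding ternary_mat_def by auto

lemma dim_translate [simp]: "dim_row (translate t A) = m" "dim_col (translate t A) = n"
  unfolding translate_def by simp_all

lemma translate_index [simp]: "i < m \<Longrightarrow> j < n \<Longrightarrow> translate t A $$ (i, j) = t $ i + A $$ (i, j)"
  unfolding translate_def by simp

lemma entry_cases: "i < m \<Longrightarrow> j < n \<Longrightarrow> A $$ (i, j) = -1 \<or> A $$ (i, j) = 0 \<or> A $$ (i, j) = 1"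
  using ternary unfolding ternary_mat_def by auto

lemma abs_entry_eq_one: "i < m \<Longrightarrow> j < n \<Longrightarrow> A $$ (i, j) \<noteq> 0 \<Longrightarrow> \<bar>A $$ (i, j)\<bar> = 1"
  using entry_cases by fastforce

lemma entry_ne_zero_iff: "i < m \<Longrightarrow> j < n \<Longrightarrow> A $$ (i, j) \<noteq> 0 \<longleftrightarrow> i \<in> col_support A j"
  unfolding col_support_def by simp

lemma col_support_subset: "col_support A j \<subseteq> {..<m}"
  unfolding col_support_def by auto

lemma entry_ne_one_if_shifted:
  assumes "i < m" "j < n" "0 < t $ i"
  shows "A $$ (i, j) \<noteq> 1"
  using totally_1_submodular_abs_entry_le[OF t1s, of i j] assms by auto

definition unshifted_rows :: "nat set" where
  "unshifted_rows = {i. i < m \<and> t $ i = 0}"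

definition lead_positive :: "nat \<Rightarrow> bool" where
  "lead_positive j \<longleftrightarrow> col_support A j \<inter> unshifted_rows = {}
     \<or> A $$ (Min (col_support A j \<inter> unshifted_rows), j) = 1"

lemma differing_entries_opposite:
  assumes j: "j1 < n" "j2 < n" "col_support A j1 = col_support A j2"
    and i: "i < m" "A $$ (i, j1) \<noteq> A $$ (i, j2)"
  shows "A $$ (i, j2) = - A $$ (i, j1)" "A $$ (i, j1) \<noteq> 0" "t $ i = 0"
proof -
  have "A $$ (i, j1) \<noteq> 0 \<longleftrightarrow> A $$ (i, j2) \<noteq> 0"
    using j i(1) by (simp add: entry_ne_zero_iff)
  then show opp: "A $$ (i, j2) = - A $$ (i, j1)" and nz: "A $$ (i, j1) \<noteq> 0"
    using entry_cases[OF i(1) j(1)] entry_cases[OF i(1) j(2)] i(2) by auto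
  show "t $ i = 0"
  proof (rule ccontr)
    assume "t $ i \<noteq> 0"
    then have "0 < t $ i"
      using t_unit_box i(1) unfolding unit_box_def by force
    then show False
      using entry_ne_one_if_shifted[OF i(1)] entry_cases[OF i(1) j(1)] opp nz j by force
  qed
qed

lemma unshifted_rows_no_mixed_signs:
  assumes rows: "a < m" "b < m" "t $ a = 0" "t $ b = 0" and cols: "j1 < n" "j2 < n"
    and "A $$ (a, j1) \<noteq> 0" "A $$ (a, j2) = - A $$ (a, j1)"
    and "A $$ (b, j1) \<noteq> 0" "A $$ (b, j2) = A $$ (b, j1)"
  shows False
proof -
  have "a \<noteq> b" "j1 \<noteq> j2"
    using assms by auto
  then have "\<bar>translate t A $$ (a, j1) * translate t A $$ (b, j2)
        - translate t A $$ (a, j2) * translate t A $$ (b, j1)\<bar> \<le> 1"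
    using rows cols by (intro totally_1_submodular_abs_minor2_le[OF t1s]) auto
  moreover have "\<bar>A $$ (a, j1)\<bar> = 1" "\<bar>A $$ (b, j1)\<bar> = 1"
    using assms by (simp_all add: abs_entry_eq_one)
  ultimately show False
    using assms by (simp add: abs_mult)
qed

lemma lead_positive_differs:
  assumes j: "j1 < n" "j2 < n" "j1 \<noteq> j2" and supp: "col_support A j1 = col_support A j2"
  shows "lead_positive j1 \<noteq> lead_positive j2"
proof -
  obtain a where a: "a < m" "A $$ (a, j1) \<noteq> A $$ (a, j2)"
    using distinct_cols j unfolding distinct_columns_def by (metis col_def dim_A eq_vecI dim_vec index_vec)
  note a_props = differing_entries_opposite[OF j(1,2) supp a]
  have a_Z: "a \<in> col_support A j1 \<inter> unshifted_rows"
    using a_props a(1) j(1) unfolding unshifted_rows_def by (simp add: entry_ne_zero_iff)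
  define b where "b = Min (col_support A j1 \<inter> unshifted_rows)"
  have "b \<in> col_support A j1 \<inter> unshifted_rows"
    unfolding b_def using a_Z finite_subset[OF col_support_subset] by (intro Min_in) auto
  then have b: "b < m" "t $ b = 0" "A $$ (b, j1) \<noteq> 0"
    unfolding unshifted_rows_def using j by (auto simp: entry_ne_zero_iff)
  have "A $$ (b, j2) = - A $$ (b, j1)"
  proof (cases "A $$ (b, j1) = A $$ (b, j2)")
    case True
    then show ?thesis
      using unshifted_rows_no_mixed_signs[OF a(1) b(1) a_props(3) b(2) j(1,2) a_props(2,1) b(3)] by simp
  qed (use differing_entries_opposite[OF j(1,2) supp b(1)] in simp)
  moreover have "lead_positive j1 \<longleftrightarrow> A $$ (b, j1) = 1" "lead_positive j2 \<longleftrightarrow> A $$ (b, j2) = 1"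
    unfolding lead_positive_def b_def using a_Z supp by auto
  ultimately show ?thesis
    using entry_cases[OF b(1) j(1)] b(3) by auto
qed

lemma obtain_support_injective_columns:
  assumes "2 * B < n"
  obtains C where "C \<subseteq> {..<n}" "B < card C" "inj_on (col_support A) C"
proof -
  define C1 C2 where "C1 = {j. j < n \<and> lead_positive j}" and "C2 = {j. j < n \<and> \<not> lead_positive j}"
  have "card C1 + card C2 = card (C1 \<union> C2)"
    unfolding C1_def C2_def by (rule card_Un_disjoint[symmetric]) auto
  also have "C1 \<union> C2 = {..<n}"
    unfolding C1_def C2_def by auto
  finally have "card C1 + card C2 = n"
    by simp
  then have "B < card C1 \<or> B < card C2"
    using assms by linarith
  moreover have "inj_on (col_support A) C1" "inj_on (col_support A) C2"
    unfolding C1_def C2_def inj_on_def using lead_positive_differs by blast+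
  moreover have "C1 \<subseteq> {..<n}" "C2 \<subseteq> {..<n}"
    unfolding C1_def C2_def by auto
  ultimately show ?thesis
    using that by blast
qed

lemma obtain_shattered_rows:
  assumes "2 * (\<Sum>i<k. m choose i) < n"
  obtains K where "K \<subseteq> {..<m}" "card K = k" "shatters (col_support A ` {..<n}) K"
proof -
  obtain C where C: "C \<subseteq> {..<n}" "(\<Sum>i<k. m choose i) < card C" "inj_on (col_support A) C"
    using obtain_support_injective_columns[OF assms] .
  have "(\<Sum>i<k. card {..<m} choose i) < card (col_support A ` C)"
    using C(2,3) by (simp add: card_image)
  moreover have "col_support A ` C \<subseteq> Pow {..<m}"
    using col_support_subset by auto
  ultimately obtain K where "K \<subseteq> {..<m}" "card K = k" "shatters (col_support A ` C) K"
    using sauer_shelah[of "{..<m}"] by blast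
  moreover have "col_support A ` C \<subseteq> col_support A ` {..<n}"
    using C(1) by (rule image_mono)
  ultimately show ?thesis
    using that shatters_mono by blast
qed

lemma obtain_trace_column:
  assumes "shatters (col_support A ` {..<n}) K" "T \<subseteq> K"
  obtains j where "j < n" "col_support A j \<inter> K = T"
  using assms unfolding shatters_def by blast

lemma sauer_submatrix_of_shattered:
  assumes K: "K \<subseteq> {..<m}" and sh: "shatters (col_support A ` {..<n}) K"
  obtains S where "sauer_matrix (card K) S" "totally_1_submodular (translate (restrict_vec t K) S)"
proof -
  have "\<forall>T \<in> Pow K. \<exists>j. j < n \<and> col_support A j \<inter> K = T"
    using obtain_trace_column[OF sh] by (metis PowD)
  then obtain c where c: "\<And>T. T \<subseteq> K \<Longrightarrow> c T < n" "\<And>T. T \<subseteq> K \<Longrightarrow> col_support A (c T) \<inter> K = T"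
    by (metis PowI bchoice)
  define rs cs where "rs = sorted_list_of_set K" and "cs = sorted_list_of_set (c ` Pow K)"
  have fin: "finite K"
    using K by (rule finite_subset) simp
  have rs: "distinct rs" "set rs = K" "length rs = card K"
    unfolding rs_def using fin by simp_all
  have "inj_on c (Pow K)"
    using c(2) by (metis PowD inj_onI)
  then have cs: "distinct cs" "set cs = c ` Pow K" "length cs = 2 ^ length rs"
    unfolding cs_def rs(3) using fin by (simp_all add: card_image card_Pow)
  have rows: "set rs \<subseteq> {..<m}" and cols: "set cs \<subseteq> {..<n}"
    using K c(1) rs(2) cs(2) by auto
  have "(\<lambda>j. col_support A j \<inter> K) ` c ` Pow K = (\<lambda>T. T) ` Pow K"
    unfolding image_image by (rule image_cong) (simp_all add: c(2))
  then have "sauer_matrix (card K) (submatrix_list A rs cs)"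
    using sauer_matrix_submatrix_list[OF ternary rs(1) rows cs(1) cols cs(3)] rs(2,3) cs(2) by simp
  moreover have "translate (restrict_vec t K) (submatrix_list A rs cs) = submatrix_list (translate t A) rs cs"
    unfolding restrict_vec_def rs_def[symmetric] using rows cols rs(3) cs(3)
    by (intro eq_matI) (simp_all add: translate_def submatrix_list_def nth_less_if_set_subset_lessThan)
  moreover have "totally_1_submodular (submatrix_list (translate t A) rs cs)"
    using rows cols by (intro totally_1_submodular_submatrix_list t1s rs(1) cs(1)) simp_all
  ultimately show ?thesis
    using that by simp
qed

lemma shattered_rows_not_unshifted:
  assumes K: "K \<subseteq> {..<m}" "3 \<le> card K" and sh: "shatters (col_support A ` {..<n}) K"
  shows "\<exists>i \<in> K. t $ i \<noteq> 0"
proof (rule ccontr)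
  assume "\<not> ?thesis"
  then have unshifted: "t $ i = 0" if "i \<in> K" for i
    using that by blast
  obtain R where "R \<subseteq> K" "card R = 3"
    using K(2) by (meson obtain_subset_with_card_n)
  then obtain a b c where abc: "distinct [a, b, c]" "{a, b, c} \<subseteq> K"
    by (metis card_3_iff distinct_length_2_or_more distinct_singleton empty_iff insert_iff)
  obtain x where x: "x < n" "col_support A x \<inter> K = {a, b}"
    using obtain_trace_column[OF sh, of "{a, b}"] abc(2) by blast
  obtain y where y: "y < n" "col_support A y \<inter> K = {a, c}"
    using obtain_trace_column[OF sh, of "{a, c}"] abc(2) by blast
  obtain z where z: "z < n" "col_support A z \<inter> K = {b, c}"
    using obtain_trace_column[OF sh, of "{b, c}"] abc(2) by blast
  obtain w where w: "w < n" "col_support A w \<inter> K = {a, b, c}"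
    using obtain_trace_column[OF sh, of "{a, b, c}"] abc(2) by blast
  have "distinct [x, y, z, w]"
    using x(2) y(2) z(2) w(2) abc(1) by (simp, safe) (metis insertCI insertE singletonD)+
  have rows: "a < m" "b < m" "c < m"
    using abc(2) K(1) by auto
  have entry: "translate t A $$ (r, j) = A $$ (r, j)" if "r \<in> {a, b, c}" "j < n" for r j
    using that abc(2) K(1) unshifted by auto
  have nonzero_iff: "A $$ (r, j) \<noteq> 0 \<longleftrightarrow> r \<in> col_support A j \<inter> K" if "r \<in> {a, b, c}" "j < n" for r j
    using that abc(2) K(1) entry_ne_zero_iff by auto
  have unit: "\<bar>translate t A $$ (r, j)\<bar> = 1" if "r \<in> {a, b, c}" "j < n" "r \<in> col_support A j \<inter> K" for r j
    using that rows entry nonzero_iff abs_entry_eq_one by auto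
  show False
  proof (rule totally_1_submodular_no_signed_odd_cycle[OF t1s abc(1) _ _ _ \<open>distinct [x, y, z, w]\<close>])
    show "a < dim_row (translate t A)" "b < dim_row (translate t A)" "c < dim_row (translate t A)"
      using rows by simp_all
    show "x < dim_col (translate t A)" "y < dim_col (translate t A)" "z < dim_col (translate t A)"
      "w < dim_col (translate t A)"
      using x y z w by simp_all
    show "translate t A $$ (c, x) = 0"
      using entry[of c x] nonzero_iff[of c x] x abc(1) by auto
    show "translate t A $$ (b, y) = 0"
      using entry[of b y] nonzero_iff[of b y] y abc(1) by auto
    show "translate t A $$ (a, z) = 0"
      using entry[of a z] nonzero_iff[of a z] z abc(1) by auto
    show "\<bar>translate t A $$ (a, x)\<bar> = 1" "\<bar>translate t A $$ (b, x)\<bar> = 1"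
      "\<bar>translate t A $$ (a, y)\<bar> = 1" "\<bar>translate t A $$ (c, y)\<bar> = 1"
      "\<bar>translate t A $$ (b, z)\<bar> = 1" "\<bar>translate t A $$ (c, z)\<bar> = 1"
      "\<bar>translate t A $$ (a, w)\<bar> = 1" "\<bar>translate t A $$ (b, w)\<bar> = 1"
      "\<bar>translate t A $$ (c, w)\<bar> = 1"
      using x y z w by - (rule unit; auto)+
  qed
qed

lemma card_columns_le_if_no_feasible_sauer:
  assumes "\<not> (\<exists>S. sauer_matrix k S \<and> feasible_for_translations S)"
  shows "n \<le> 2 * (\<Sum>i<k. m choose i)"
proof (rule ccontr)
  assume "\<not> ?thesis"
  then obtain K where K: "K \<subseteq> {..<m}" "card K = k" "shatters (col_support A ` {..<n}) K"
    using obtain_shattered_rows by (metis not_le)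
  then obtain S where S: "sauer_matrix k S" "totally_1_submodular (translate (restrict_vec t K) S)"
    using sauer_submatrix_of_shattered by metis
  moreover have "dim_row S = k"
    using S(1) unfolding sauer_matrix_def ternary_mat_def carrier_mat_def by simp
  moreover have "restrict_vec t K \<in> unit_box k"
    using restrict_vec_unit_box[OF t_unit_box K(1)] K(2) by simp
  ultimately have "feasible_for_translations S"
    unfolding feasible_for_translations_def feasible_def by auto
  then show False
    using assms S(1) by blast
qed

lemma card_columns_le_if_no_grid_sauer:
  assumes "t \<in> grid \<delta> m" "3 \<le> k"
    and "\<not> (\<exists>S t. sauer_matrix k S \<and> t \<in> unit_box k \<inter> grid \<delta> k \<and> t \<noteq> 0\<^sub>v k \<and>
                  totally_1_submodular (translate t S))"
  shows "n \<le> 2 * (\<Sum>i<k. m choose i)"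
proof (rule ccontr)
  assume "\<not> ?thesis"
  then obtain K where K: "K \<subseteq> {..<m}" "card K = k" "shatters (col_support A ` {..<n}) K"
    using obtain_shattered_rows by (metis not_le)
  then obtain S where S: "sauer_matrix k S" "totally_1_submodular (translate (restrict_vec t K) S)"
    using sauer_submatrix_of_shattered by metis
  moreover have "restrict_vec t K \<in> unit_box k \<inter> grid \<delta> k"
    using restrict_vec_unit_box[OF t_unit_box K(1)] restrict_vec_grid[OF assms(1) K(1)] K(2) by simp
  moreover have "restrict_vec t K \<noteq> 0\<^sub>v k"
    using shattered_rows_not_unshifted[OF K(1) _ K(3)] restrict_vec_nonzero[of K] K assms(2)
    by (metis finite_nat_iff_bounded)
  ultimately show False
    using assms(3) by blast
qed

end

lemma scaled_first_unit_vec: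
  assumes "0 < m" "2 \<le> \<delta>"
  shows "vec m (\<lambda>i. if i = 0 then 1 / real \<delta> else 0) \<in> unit_box m \<inter> grid \<delta> m"
    and "vec m (\<lambda>i. if i = 0 then 1 / real \<delta> else 0) \<noteq> 0\<^sub>v m"
proof -
  have "\<exists>z::int. (if i = 0 then 1 / real \<delta> else 0) = real_of_int z / real \<delta>" for i :: nat
    by (cases "i = 0") (auto intro: exI[of _ 1] exI[of _ 0])
  then show "vec m (\<lambda>i. if i = 0 then 1 / real \<delta> else 0) \<in> unit_box m \<inter> grid \<delta> m"
    using assms(2) unfolding unit_box_def grid_def by auto
  have "vec m (\<lambda>i. if i = 0 then 1 / real \<delta> else 0) $ 0 \<noteq> 0\<^sub>v m $ 0"
    using assms by simp
  then show "vec m (\<lambda>i. if i = 0 then 1 / real \<delta> else 0) \<noteq> 0\<^sub>v m"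
    by metis
qed

text \<open>For \<open>k \<le> 2\<close> the support of column \<open>j\<close> is the set of binary digits of \<open>j\<close>.\<close>

definition digit_sauer_matrix :: "nat \<Rightarrow> real mat" where
  "digit_sauer_matrix k =
     mat k (2 ^ k) (\<lambda>(i, j). if (i = 0 \<and> odd j) \<or> (i = 1 \<and> 2 \<le> j) then -1 else 0)"

lemma col_support_digit_sauer_matrix:
  "j < 2 ^ k \<Longrightarrow> col_support (digit_sauer_matrix k) j = {i. i < k \<and> (i = 0 \<and> odd j \<or> i = 1 \<and> 2 \<le> j)}"
  unfolding col_support_def digit_sauer_matrix_def by (auto split: if_splits)

lemma sauer_matrix_digit_sauer_matrix:
  assumes "k = 1 \<or> k = 2"
  shows "sauer_matrix k (digit_sauer_matrix k)"
proof -
  have "bij_betw (col_support (digit_sauer_matrix k)) {..<2 ^ k} (Pow {..<k})"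
    using assms
  proof
    assume "k = 1"
    moreover have "{..<2 :: nat} = {0, 1}" "Pow {..<1 :: nat} = {{}, {0}}"
      by (auto simp: lessThan_Suc)
    ultimately show ?thesis
      using col_support_digit_sauer_matrix[of 0 k] col_support_digit_sauer_matrix[of 1 k]
      by (simp add: bij_betw_def)
  next
    assume "k = 2"
    moreover have "{..<4 :: nat} = {0, 1, 2, 3}" "Pow {..<2 :: nat} = {{}, {0}, {1}, {0, 1}}"
      by (auto simp: lessThan_Suc numeral_eq_Suc Pow_insert)
    moreover have "col_support (digit_sauer_matrix 2) 0 = {}" "col_support (digit_sauer_matrix 2) 1 = {0}"
      "col_support (digit_sauer_matrix 2) 2 = {1}" "col_support (digit_sauer_matrix 2) 3 = {0, 1}"
      by (auto simp: col_support_digit_sauer_matrix)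
    ultimately show ?thesis
      by (simp add: bij_betw_def)
  qed
  then show ?thesis
    unfolding sauer_matrix_def ternary_mat_def digit_sauer_matrix_def by auto
qed

lemma totally_1_submodular_translate_digit_sauer_matrix:
  assumes k: "k = 1 \<or> k = 2" and \<tau>: "0 < \<tau>" "\<tau> \<le> 1 / 2"
  shows "totally_1_submodular (translate (vec k (\<lambda>i. if i = 0 then \<tau> else 0)) (digit_sauer_matrix k))"
    (is "totally_1_submodular ?M")
proof (rule totally_1_submodular_two_rows)
  have dim: "dim_row ?M = k" "dim_col ?M = 2 ^ k"
    unfolding translate_def digit_sauer_matrix_def by simp_all
  have index: "?M $$ (i, j) =
      (if i = 0 then \<tau> else 0) + (if (i = 0 \<and> odd j) \<or> (i = 1 \<and> 2 \<le> j) then -1 else 0)"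
    if "i < k" "j < 2 ^ k" for i j
    using that unfolding translate_def digit_sauer_matrix_def by simp
  show "dim_row ?M \<le> 2"
    using k dim by auto
  show "\<bar>?M $$ (i, j)\<bar> \<le> 1" if "i < dim_row ?M" "j < dim_col ?M" for i j
    using that \<tau> index[of i j] dim by auto
  show "\<bar>?M $$ (0, p) * ?M $$ (1, q) - ?M $$ (0, q) * ?M $$ (1, p)\<bar> \<le> 1"
    if "dim_row ?M = 2" "p < q" "q < dim_col ?M" for p q
  proof -
    have "k = 2" "q < 4"
      using that dim by simp_all
    then have "(p, q) \<in> {(0, 1), (0, 2), (0, 3), (1, 2), (1, 3), (2, 3)}"
      using \<open>p < q\<close> by auto
    then show ?thesis
      using \<open>k = 2\<close> \<tau> index[of 0 p] index[of 0 q] index[of 1 p] index[of 1 q] \<open>q < 4\<close> by auto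
  qed
qed

lemma small_sauer_matrix_grid_translatable:
  assumes "k = 1 \<or> k = 2" "2 \<le> \<delta>"
  shows "\<exists>S t. sauer_matrix k S \<and> t \<in> unit_box k \<inter> grid \<delta> k \<and> t \<noteq> 0\<^sub>v k \<and>
           totally_1_submodular (translate t S)"
proof -
  define t where "t = vec k (\<lambda>i. if i = 0 then 1 / real \<delta> else 0)"
  have "0 < 1 / real \<delta>" "1 / real \<delta> \<le> 1 / 2"
    using assms(2) by (auto simp: field_simps)
  then have "totally_1_submodular (translate t (digit_sauer_matrix k))"
    unfolding t_def by (rule totally_1_submodular_translate_digit_sauer_matrix[OF assms(1)])
  moreover have "t \<in> unit_box k \<inter> grid \<delta> k" "t \<noteq> 0\<^sub>v k"
    unfolding t_def using scaled_first_unit_vec[of k \<delta>] assms by auto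
  ultimately show ?thesis
    using sauer_matrix_digit_sauer_matrix[OF assms(1)] by blast
qed

lemma Max_le_if_bounded:
  fixes N :: "nat set"
  assumes "x \<in> N" "\<And>n. n \<in> N \<Longrightarrow> n \<le> B"
  shows "Max N \<le> B"
proof -
  have "finite N"
    using assms(2) finite_nat_set_iff_bounded_le by blast
  then show ?thesis
    using assms by (subst Max_le_iff) auto
qed

lemma sum_binomial_bigo:
  assumes "0 < k"
  shows "(\<lambda>n::nat. real (2 * (\<Sum>i<k. n choose i))) \<in> O(\<lambda>n. real n ^ (k - 1))"
proof (rule bigoI[where c = "2 * real k"])
  show "\<forall>\<^sub>F n in at_top. norm (real (2 * (\<Sum>i<k. n choose i))) \<le> 2 * real k * norm (real n ^ (k - 1))"
  proof (rule eventually_mono[OF eventually_ge_at_top[of 1]])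
    fix n :: nat assume n: "1 \<le> n"
    have "n choose i \<le> n ^ (k - 1)" if "i < k" for i
    proof -
      have "n choose i \<le> n ^ i"
        by (cases "i \<le> n") (simp_all add: binomial_le_pow binomial_eq_0)
      also have "\<dots> \<le> n ^ (k - 1)"
        using n that by (intro power_increasing) auto
      finally show ?thesis .
    qed
    then have "(\<Sum>i<k. n choose i) \<le> k * n ^ (k - 1)"
      using sum_mono[of "{..<k}" "\<lambda>i. n choose i" "\<lambda>_. n ^ (k - 1)"] by simp
    then have "real (\<Sum>i<k. n choose i) \<le> real k * real n ^ (k - 1)"
      by (metis of_nat_le_iff of_nat_mult of_nat_power)
    then show "norm (real (2 * (\<Sum>i<k. n choose i))) \<le> 2 * real k * norm (real n ^ (k - 1))"
      by (simp add: abs_of_nonneg sum_nonneg)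
  qed
qed

lemma admissible_without_columns:
  "ternary_mat m 0 (0\<^sub>m m 0) \<and> distinct_columns (0\<^sub>m m 0) \<and> totally_1_submodular (translate t (0\<^sub>m m 0))"
  unfolding ternary_mat_def distinct_columns_def
  by (auto intro: totally_1_submodular_no_columns simp: translate_def)

lemma shifted_heller_le:
  assumes "0 < m" "\<not> (\<exists>S. sauer_matrix k S \<and> feasible_for_translations S)"
  shows "h\<^sub>s m \<le> 2 * (\<Sum>i<k. m choose i)"
  unfolding shifted_heller_def
  using scaled_first_unit_vec[OF assms(1), of 2] admissible_without_columns
    t1s_translate.card_columns_le_if_no_feasible_sauer[OF _ assms(2)]
  by (intro Max_le_if_bounded[of 0]) (auto simp: t1s_translate_def)

lemma shifted_heller_delta_le:
  assumes "0 < m" "3 \<le> k" "2 \<le> \<delta>"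
    and "\<not> (\<exists>S t. sauer_matrix k S \<and> t \<in> unit_box k \<inter> grid \<delta> k \<and> t \<noteq> 0\<^sub>v k \<and>
                  totally_1_submodular (translate t S))"
  shows "shifted_heller_delta \<delta> m \<le> 2 * (\<Sum>i<k. m choose i)"
  unfolding shifted_heller_delta_def
  using scaled_first_unit_vec[OF assms(1,3)] admissible_without_columns
    t1s_translate.card_columns_le_if_no_grid_sauer[of _ _ m _ \<delta> k] assms(2,4)
  by (intro Max_le_if_bounded[of 0]) (auto simp: t1s_translate_def)

theorem proposition3p4:
  fixes m k \<Delta> :: nat
  assumes "0 < k" "k < m" "0 < \<Delta>"
  shows "((\<not> (\<exists>S. sauer_matrix k S \<and> feasible_for_translations S)) \<longrightarrow>
            h\<^sub>s m \<le> 2 * (\<Sum>i<k. m choose i))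
       \<and> ((2 \<le> \<Delta> \<and> \<not> (\<exists>S t. sauer_matrix k S \<and> t \<in> unit_box k \<inter> grid \<Delta> k \<and> t \<noteq> 0\<^sub>v k \<and>
                         totally_1_submodular (translate t S))) \<longrightarrow>
            shifted_heller_delta \<Delta> m \<le> 2 * (\<Sum>i<k. m choose i))
       \<and> (\<lambda>n::nat. real (2 * (\<Sum>i<k. n choose i))) \<in> O(\<lambda>n. real n ^ (k - 1))"
proof (intro conjI impI)
  have "0 < m"
    using assms(1,2) by simp
  then show "h\<^sub>s m \<le> 2 * (\<Sum>i<k. m choose i)"
    if "\<not> (\<exists>S. sauer_matrix k S \<and> feasible_for_translations S)"
    using that by (rule shifted_heller_le)
  show "shifted_heller_delta \<Delta> m \<le> 2 * (\<Sum>i<k. m choose i)"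
    if H: "2 \<le> \<Delta> \<and> \<not> (\<exists>S t. sauer_matrix k S \<and> t \<in> unit_box k \<inter> grid \<Delta> k \<and> t \<noteq> 0\<^sub>v k \<and>
                         totally_1_submodular (translate t S))"
  proof -
    \<comment> \<open>For \<open>k \<le> 2\<close> the hypothesis of (ii) is never satisfied.\<close>
    have "3 \<le> k"
      using small_sauer_matrix_grid_translatable[of k \<Delta>] H assms(1) by fastforce
    then show ?thesis
      using shifted_heller_delta_le[OF \<open>0 < m\<close>] H by blast
  qed
  show "(\<lambda>n::nat. real (2 * (\<Sum>i<k. n choose i))) \<in> O(\<lambda>n. real n ^ (k - 1))"
    using assms(1) by (rule sum_binomial_bigo)
qed

end
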